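(* Assume (H1)–(H5), let $z\in(0,z_s)$ and $\eta\in(0,\tfrac12\log\frac{z_s}{z})$. There exists a constant $K>0$, depending only on $(a_i)$, $(b_i)$, $z$ and $\eta$, such that for every compactly supported sequence $h=(h_i)_{i\ge1}$, $$\|L(h)\|_{\mathcal Z}\le K\|h\|_{\mathcal Z_{\mathcal D}}.$$
   Context: Let $(a_i)_{i\ge1}$, $(b_i)_{i\ge1}$ be nonnegative sequences. $Q_1=1$, $Q_i=\prod_{j=2}^i\frac{a_{j-1}}{b_j}$ for $i\ge2$; $z_s$ is the radius of convergence of $\sum_ia_iQ_iz^i$. For fixed $z\in(0,z_s)$ put $\Theta_i=Q_iz^i$. Define $\sigma_1=3a_1z+\sum_{i\ge1}a_i\Theta_i$ and $\sigma_i=a_iz+b_i$ for $i\ge2$. $\mathcal Z$ is the space of sequences with $\|h\|_{\mathcal Z}=\sum_ie^{\eta i}\Theta_i|h_i|<\infty$ and $\mathcal Z_{\mathcal D}$ those with $\|h\|_{\mathcal Z_{\mathcal D}}=\sum_i(1+\sigma_i)e^{\eta i}\Theta_i|h_i|<\infty$. Linear operators $S,P$ are defined on compactly supported sequences $h$ by: for all compactly supported $\varphi$, $\sum_iS_i(h)\Theta_i\varphi_i=\sum_{i\ge1}[\varphi_{i+1}-\varphi_i-\varphi_1]a_i\Theta_1\Theta_i(h_i+h_1-h_{i+1})$ and $\sum_iP_i(h)\Theta_i\varphi_i=-\varphi_1\big(a_1\Theta_1^2h_2+\sum_{i\ge1}a_i\Theta_1\Theta_ih_{i+1}\big)$; and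 $L=S+P$. (H1): for some $\alpha\in[0,1]$ there exists $a\ge0$ with $0\le a_i\le a\,i^\alpha$ and $b_i\ge0$ for all $i$. (H2): $\inf_i a_i>0$ and $\inf_i b_i>0$. (H3): $\lim_{i\to\infty}Q_{i+1}/Q_i=1/z_s$. (H4): there is $l>0$ with $\lim_{i\to\infty}a_{i+1}/a_i=l$. (H5): there exist $\beta\in[0,1]$ and $b>0$ with $b_i\le b\,i^\beta$ for all $i\ge1$. *)

theory Defs
  imports "HOL-Analysis.Analysis"
begin

text \<open>Sequences are functions nat => real; only indices i >= 1 are meaningful
  (the value at index 0 is ignored everywhere).\<close>

definition Qc :: "(nat \<Rightarrow> real) \<Rightarrow> (nat \<Rightarrow> real) \<Rightarrow> nat \<Rightarrow> real" where
  "Qc a b i = (\<Prod>j\<in>{2..i}. a (j - 1) / b j)"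

definition zs :: "(nat \<Rightarrow> real) \<Rightarrow> (nat \<Rightarrow> real) \<Rightarrow> ereal" where
  "zs a b = conv_radius (\<lambda>i. if i = 0 then 0 else a i * Qc a b i)"

definition Theta :: "(nat \<Rightarrow> real) \<Rightarrow> (nat \<Rightarrow> real) \<Rightarrow> real \<Rightarrow> nat \<Rightarrow> real" where
  "Theta a b z i = Qc a b i * z ^ i"

definition sigma :: "(nat \<Rightarrow> real) \<Rightarrow> (nat \<Rightarrow> real) \<Rightarrow> real \<Rightarrow> nat \<Rightarrow> real" where
  "sigma a b z i = (if i = 1 then 3 * a 1 * z + (\<Sum>k. a (Suc k) * Theta a b z (Suc k))
                    else a i * z + b i)"

definition normZ :: "(nat \<Rightarrow> real) \<Rightarrow> (nat \<Rightarrow> real) \<Rightarrow> real \<Rightarrow> real \<Rightarrow> (nat \<Rightarrow> real) \<Rightarrow> real" where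
  "normZ a b z \<eta> h = (\<Sum>k. exp (\<eta> * real (Suc k)) * Theta a b z (Suc k) * \<bar>h (Suc k)\<bar>)"

definition normZD :: "(nat \<Rightarrow> real) \<Rightarrow> (nat \<Rightarrow> real) \<Rightarrow> real \<Rightarrow> real \<Rightarrow> (nat \<Rightarrow> real) \<Rightarrow> real" where
  "normZD a b z \<eta> h = (\<Sum>k. (1 + sigma a b z (Suc k)) * exp (\<eta> * real (Suc k))
                          * Theta a b z (Suc k) * \<bar>h (Suc k)\<bar>)"

definition compact_supp :: "(nat \<Rightarrow> real) \<Rightarrow> bool" where
  "compact_supp h \<longleftrightarrow> finite {i. h i \<noteq> 0}"

text \<open>The operators S and P, written out explicitly: S_j(h) (resp. P_j(h)) is the
  coefficient of phi_j in the defining duality identity, divided by Theta_j.\<close>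
definition Sop :: "(nat \<Rightarrow> real) \<Rightarrow> (nat \<Rightarrow> real) \<Rightarrow> real \<Rightarrow> (nat \<Rightarrow> real) \<Rightarrow> nat \<Rightarrow> real" where
  "Sop a b z h j = (if j = 0 then 0 else
     ((if j \<ge> 2 then a (j - 1) * Theta a b z 1 * Theta a b z (j - 1) * (h (j - 1) + h 1 - h j) else 0)
      - a j * Theta a b z 1 * Theta a b z j * (h j + h 1 - h (Suc j))
      - (if j = 1 then (\<Sum>k. a (Suc k) * Theta a b z 1 * Theta a b z (Suc k)
                              * (h (Suc k) + h 1 - h (Suc (Suc k)))) else 0))
     / Theta a b z j)"

definition Pop :: "(nat \<Rightarrow> real) \<Rightarrow> (nat \<Rightarrow> real) \<Rightarrow> real \<Rightarrow> (nat \<Rightarrow> real) \<Rightarrow> nat \<Rightarrow> real" where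
  "Pop a b z h j = (if j = 1 then
     - (a 1 * (Theta a b z 1)^2 * h 2
        + (\<Sum>k. a (Suc k) * Theta a b z 1 * Theta a b z (Suc k) * h (Suc (Suc k))))
       / Theta a b z 1 else 0)"

definition Lop :: "(nat \<Rightarrow> real) \<Rightarrow> (nat \<Rightarrow> real) \<Rightarrow> real \<Rightarrow> (nat \<Rightarrow> real) \<Rightarrow> nat \<Rightarrow> real" where
  "Lop a b z h j = Sop a b z h j + Pop a b z h j"

end

theory Submission
  imports Defs
begin

(* L is in conservation form. With the fluxes J_i = a_i z Theta_i (h_i + h_1 - h_(i+1)) one has
   Theta_j L_j = J_(j-1) - J_j for j >= 2, and
   z L_1 = - J_1 - sum_i J_i - a_1 z^2 h_2 - sum_i a_i z Theta_i h_(i+1).  Hence it suffices to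
   bound sum_i e^(eta i) a_i z Theta_i (|h_i| + |h_1| + |h_(i+1)|) by the Z_D norm of h.  The first
   term is dominated by the Z_D weight at i since a_i z <= sigma_i; the last one by the Z_D weight at
   i+1 since Theta_(i+1) = Theta_i a_i z / b_(i+1) and b_(i+1) <= sigma_(i+1); the middle one is
   z |h_1| M with M = sum_i e^(eta i) a_i Theta_i, finite because z e^eta < z_s.  This yields
   K = (1 + 5 e^eta) (2 + M). *)

lemma summable_suminf_le_comparison:
  fixes f g :: "nat \<Rightarrow> real"
  assumes g: "summable g" and f: "\<And>n. 0 \<le> f n" "\<And>n. f n \<le> g n"
  shows "summable f" "suminf f \<le> suminf g"
proof -
  show "summable f"
    using f by (intro summable_comparison_test'[OF g]) auto
  then show "suminf f \<le> suminf g"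
    using f g by (intro suminf_le)
qed

lemma summable_suminf_le_shifted_majorant:
  fixes u F :: "nat \<Rightarrow> real"
  assumes F: "summable F" "\<And>k. 0 \<le> F k"
    and u_nonneg: "\<And>k. 0 \<le> u k"
    and u_0: "u 0 \<le> C * suminf F"
    and u_Suc: "\<And>k. u (Suc k) \<le> c * F k + F (Suc k)"
  shows "summable u" "suminf u \<le> (C + c + 1) * suminf F"
proof -
  have G: "summable (\<lambda>k. c * F k + F (Suc k))"
    using F(1) by (intro summable_add summable_mult) (simp_all add: summable_Suc_iff)
  note uS = summable_suminf_le_comparison[OF G u_nonneg u_Suc]
  then show "summable u"
    by (simp add: summable_Suc_iff)
  have "(\<Sum>k. u (Suc k)) \<le> (\<Sum>k. c * F k + F (Suc k))"
    by (rule uS(2))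
  also have "\<dots> = c * suminf F + (suminf F - F 0)"
    using F(1) G by (simp add: suminf_add[symmetric] suminf_mult summable_Suc_iff suminf_split_head)
  finally show "suminf u \<le> (C + c + 1) * suminf F"
    using suminf_split_head[OF \<open>summable u\<close>] u_0 F(2)[of 0] by (simp add: algebra_simps)
qed

lemma summable_compact_supp:
  fixes f h :: "nat \<Rightarrow> real"
  assumes "compact_supp h"
  shows "summable (\<lambda>k. f k * \<bar>h (Suc k)\<bar>)"
proof (rule summable_finite)
  show "finite {k. h (Suc k) \<noteq> 0}"
    using assms finite_vimageI[of "{i. h i \<noteq> 0}" Suc] by (simp add: compact_supp_def vimage_def)
qed auto

lemma Qc_Suc: "1 \<le> i \<Longrightarrow> Qc a b (Suc i) = Qc a b i * (a i / b (Suc i))"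
  unfolding Qc_def by simp

lemma Theta_1 [simp]: "Theta a b z 1 = z" "Theta a b z (Suc 0) = z"
  by (simp_all add: Theta_def Qc_def)

lemma Theta_Suc: "1 \<le> i \<Longrightarrow> Theta a b z (Suc i) = Theta a b z i * a i * z / b (Suc i)"
  by (simp add: Theta_def Qc_Suc)

lemma Qc_pos:
  assumes "\<And>i. 1 \<le> i \<Longrightarrow> 0 < a i" "\<And>i. 1 \<le> i \<Longrightarrow> 0 < b i"
  shows "0 < Qc a b i"
  unfolding Qc_def using assms by (intro prod_pos) auto

lemma summable_abs_a_Qc_power:
  assumes "0 \<le> x" "ereal x < zs a b"
  shows "summable (\<lambda>k. \<bar>a (Suc k) * Qc a b (Suc k)\<bar> * x ^ Suc k)"
proof -
  let ?c = "\<lambda>i. if i = 0 then 0 else a i * Qc a b i"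
  have "summable (\<lambda>i. norm (?c i * x ^ i))"
    using assms by (intro abs_summable_in_conv_radius) (simp_all add: zs_def)
  then show ?thesis
    by (subst (asm) summable_Suc_iff[symmetric]) (simp add: abs_mult power_abs assms)
qed

definition flux :: "(nat \<Rightarrow> real) \<Rightarrow> (nat \<Rightarrow> real) \<Rightarrow> real \<Rightarrow> (nat \<Rightarrow> real) \<Rightarrow> nat \<Rightarrow> real" where
  "flux a b z h i = a i * z * Theta a b z i * (h i + h 1 - h (Suc i))"

lemma Theta_mult_Lop_ge_2:
  assumes "2 \<le> j" "Theta a b z j \<noteq> 0"
  shows "Theta a b z j * Lop a b z h j = flux a b z h (j - 1) - flux a b z h j"
  using assms by (simp add: Lop_def Sop_def Pop_def flux_def)

lemma z_mult_Lop_1: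
  assumes "z \<noteq> 0"
  shows "z * Lop a b z h 1 = - flux a b z h 1 - (\<Sum>k. flux a b z h (Suc k))
           - (a 1 * z\<^sup>2 * h 2 + (\<Sum>k. a (Suc k) * z * Theta a b z (Suc k) * h (Suc (Suc k))))"
  using assms by (simp add: Lop_def Sop_def Pop_def flux_def field_simps power2_eq_square)

locale weighted_subcritical =
  fixes a b :: "nat \<Rightarrow> real" and z \<eta> :: real
  assumes a_pos: "1 \<le> i \<Longrightarrow> 0 < a i"
    and b_pos: "1 \<le> i \<Longrightarrow> 0 < b i"
    and z_pos: "0 < z"
    and eta_nonneg: "0 \<le> \<eta>"
    and weighted_below_radius: "ereal (z * exp \<eta>) < zs a b"
begin

abbreviation \<Theta> :: "nat \<Rightarrow> real" where "\<Theta> \<equiv> Theta a b z"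
abbreviation \<sigma> :: "nat \<Rightarrow> real" where "\<sigma> \<equiv> sigma a b z"
abbreviation wt :: "nat \<Rightarrow> real" where "wt i \<equiv> exp (\<eta> * real i)"

lemma Qc_gt_0: "0 < Qc a b i"
  using a_pos b_pos by (intro Qc_pos) auto

lemma Theta_gt_0: "0 < \<Theta> i"
  using Qc_gt_0 z_pos by (simp add: Theta_def)

lemma wt_ge_1: "1 \<le> wt i"
  using eta_nonneg by simp

lemma le_wt_mult: "0 \<le> x \<Longrightarrow> x \<le> wt i * x"
  using mult_right_mono[OF wt_ge_1[of i]] by simp

lemma wt_Suc: "wt (Suc i) = exp \<eta> * wt i"
  by (simp add: distrib_left exp_add)

lemma summable_weighted_a_Theta: "summable (\<lambda>k. wt (Suc k) * a (Suc k) * \<Theta> (Suc k))"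
proof -
  have "\<bar>a (Suc k) * Qc a b (Suc k)\<bar> * (z * exp \<eta>) ^ Suc k = wt (Suc k) * a (Suc k) * \<Theta> (Suc k)" for k
    using a_pos[of "Suc k"] Qc_gt_0[of "Suc k"]
    by (simp add: Theta_def power_mult_distrib exp_of_nat_mult[symmetric] distrib_left exp_add mult_ac)
  with summable_abs_a_Qc_power[OF _ weighted_below_radius] z_pos show ?thesis
    by simp
qed

lemma a_Theta_nonneg: "0 \<le> a (Suc k) * \<Theta> (Suc k)"
  using a_pos[of "Suc k"] Theta_gt_0[of "Suc k"] by simp

lemma summable_a_Theta: "summable (\<lambda>k. a (Suc k) * \<Theta> (Suc k))"
proof (rule summable_comparison_test'[OF summable_weighted_a_Theta])
  show "norm (a (Suc k) * \<Theta> (Suc k)) \<le> wt (Suc k) * a (Suc k) * \<Theta> (Suc k)" for k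
    using mult_right_mono[OF wt_ge_1[of "Suc k"] a_Theta_nonneg[of k]] a_Theta_nonneg[of k]
    by (simp add: mult.assoc)
qed

abbreviation weighted_rate_sum :: real where
  "weighted_rate_sum \<equiv> \<Sum>k. wt (Suc k) * a (Suc k) * \<Theta> (Suc k)"

lemma weighted_rate_sum_nonneg: "0 \<le> weighted_rate_sum"
  using summable_weighted_a_Theta a_Theta_nonneg
  by (intro suminf_nonneg) (simp_all add: mult.assoc)

lemma sigma_ge_a_z: "1 \<le> i \<Longrightarrow> a i * z \<le> \<sigma> i"
  using suminf_nonneg[OF summable_a_Theta a_Theta_nonneg] a_pos[of 1] z_pos
  by (auto simp: sigma_def b_pos less_imp_le)

lemma sigma_ge_b: "2 \<le> i \<Longrightarrow> b i \<le> \<sigma> i"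
  using a_pos[of i] z_pos by (simp add: sigma_def)

lemma sigma_nonneg: "1 \<le> i \<Longrightarrow> 0 \<le> \<sigma> i"
  using sigma_ge_a_z[of i] a_pos[of i] z_pos by (meson mult_pos_pos less_le_trans less_imp_le)

abbreviation zd_weight :: "nat \<Rightarrow> real" where
  "zd_weight i \<equiv> (1 + \<sigma> i) * wt i * \<Theta> i"

abbreviation flux_weight :: "nat \<Rightarrow> real" where
  "flux_weight i \<equiv> wt i * a i * z * \<Theta> i"

lemma flux_weight_nonneg: "1 \<le> i \<Longrightarrow> 0 \<le> flux_weight i"
  using a_pos[of i] z_pos Theta_gt_0[of i] by simp

lemma zd_weight_nonneg: "1 \<le> i \<Longrightarrow> 0 \<le> zd_weight i"
  using sigma_nonneg[of i] Theta_gt_0[of i] by simp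

lemma flux_weight_le_zd_weight: "1 \<le> i \<Longrightarrow> flux_weight i \<le> zd_weight i"
  using sigma_ge_a_z[of i] Theta_gt_0[of i]
  by (simp add: mult_right_mono mult.commute[of "wt i"] mult.assoc)

lemma flux_weight_le_zd_weight_Suc: "1 \<le> i \<Longrightarrow> flux_weight i \<le> zd_weight (Suc i)"
proof -
  assume i: "1 \<le> i"
  define c where "c = (1 + \<sigma> (Suc i)) / b (Suc i) * exp \<eta>"
  have b: "0 < b (Suc i)" "b (Suc i) \<le> 1 + \<sigma> (Suc i)"
    using b_pos[of "Suc i"] sigma_ge_b[of "Suc i"] i by auto
  have "1 * 1 \<le> c"
    unfolding c_def using b eta_nonneg by (intro mult_mono) simp_all
  then have "1 * flux_weight i \<le> c * flux_weight i"
    using flux_weight_nonneg[OF i] by (intro mult_right_mono) simp_all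
  also have "c * flux_weight i = zd_weight (Suc i)"
    unfolding c_def using i by (simp add: Theta_Suc distrib_left exp_add)
  finally show ?thesis
    by simp
qed

lemma z_le_zd_weight_1: "z \<le> zd_weight 1"
  using mult_mono[OF _ wt_ge_1[of 1], of 1 "1 + \<sigma> 1"] sigma_nonneg[of 1] z_pos
  by (simp add: mult_le_cancel_right1)

abbreviation flux_majorant :: "(nat \<Rightarrow> real) \<Rightarrow> nat \<Rightarrow> real" where
  "flux_majorant h i \<equiv> flux_weight i * (\<bar>h i\<bar> + \<bar>h 1\<bar> + \<bar>h (Suc i)\<bar>)"

lemma weighted_abs_flux_le: "1 \<le> i \<Longrightarrow> wt i * \<bar>flux a b z h i\<bar> \<le> flux_majorant h i"
proof -
  assume i: "1 \<le> i"
  have "\<bar>h i + h 1 - h (Suc i)\<bar> \<le> \<bar>h i\<bar> + \<bar>h 1\<bar> + \<bar>h (Suc i)\<bar>"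
    by linarith
  then have "flux_weight i * \<bar>h i + h 1 - h (Suc i)\<bar> \<le> flux_majorant h i"
    by (intro mult_left_mono flux_weight_nonneg[OF i])
  moreover have "wt i * \<bar>flux a b z h i\<bar> = flux_weight i * \<bar>h i + h 1 - h (Suc i)\<bar>"
    using a_pos[OF i] z_pos Theta_gt_0[of i] by (simp add: flux_def abs_mult)
  ultimately show ?thesis
    by simp
qed

lemma abs_flux_le: "1 \<le> i \<Longrightarrow> \<bar>flux a b z h i\<bar> \<le> flux_majorant h i"
  using weighted_abs_flux_le[of i h] le_wt_mult[OF abs_ge_zero, of "flux a b z h i" i] by linarith

lemma abs_monomer_term_le:
  "\<bar>a (Suc k) * z * \<Theta> (Suc k) * h (Suc (Suc k))\<bar> \<le> flux_majorant h (Suc k)"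
proof -
  have "\<bar>a (Suc k) * z * \<Theta> (Suc k) * h (Suc (Suc k))\<bar> = a (Suc k) * z * \<Theta> (Suc k) * \<bar>h (Suc (Suc k))\<bar>"
    using a_pos[of "Suc k"] z_pos Theta_gt_0[of "Suc k"] by (simp add: abs_mult)
  also have "\<dots> \<le> flux_weight (Suc k) * \<bar>h (Suc (Suc k))\<bar>"
    using le_wt_mult[of "a (Suc k) * z * \<Theta> (Suc k) * \<bar>h (Suc (Suc k))\<bar>" "Suc k"]
      a_pos[of "Suc k"] z_pos Theta_gt_0[of "Suc k"] by (simp add: mult_ac)
  also have "\<dots> \<le> flux_majorant h (Suc k)"
    using flux_weight_nonneg[of "Suc k"] by (intro mult_left_mono) simp_all
  finally show ?thesis .
qed

lemma weighted_Lop_Suc_Suc_le: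
  "wt (Suc (Suc k)) * \<Theta> (Suc (Suc k)) * \<bar>Lop a b z h (Suc (Suc k))\<bar>
     \<le> exp \<eta> * flux_majorant h (Suc k) + flux_majorant h (Suc (Suc k))"
proof -
  let ?J = "flux a b z h"
  have "wt (Suc (Suc k)) * \<Theta> (Suc (Suc k)) * \<bar>Lop a b z h (Suc (Suc k))\<bar>
      = wt (Suc (Suc k)) * \<bar>\<Theta> (Suc (Suc k)) * Lop a b z h (Suc (Suc k))\<bar>"
    using Theta_gt_0[of "Suc (Suc k)"] by (simp add: abs_mult mult.assoc)
  also have "\<dots> = wt (Suc (Suc k)) * \<bar>?J (Suc k) - ?J (Suc (Suc k))\<bar>"
    using Theta_gt_0[of "Suc (Suc k)"] by (simp add: Theta_mult_Lop_ge_2)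
  also have "\<dots> \<le> exp \<eta> * (wt (Suc k) * \<bar>?J (Suc k)\<bar>) + wt (Suc (Suc k)) * \<bar>?J (Suc (Suc k))\<bar>"
    unfolding wt_Suc[of "Suc k"] by (simp add: abs_triangle_ineq4 distrib_left[symmetric] mult.assoc)
  also have "\<dots> \<le> exp \<eta> * flux_majorant h (Suc k) + flux_majorant h (Suc (Suc k))"
    using weighted_abs_flux_le[of "Suc k" h] weighted_abs_flux_le[of "Suc (Suc k)" h]
    by (intro add_mono mult_left_mono) simp_all
  finally show ?thesis .
qed

lemma zd_term_nonneg: "0 \<le> zd_weight (Suc k) * \<bar>h (Suc k)\<bar>"
  using zd_weight_nonneg[of "Suc k"] by simp

lemma normZD_eq_suminf: "normZD a b z \<eta> h = (\<Sum>k. zd_weight (Suc k) * \<bar>h (Suc k)\<bar>)"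
  unfolding normZD_def ..

context
  fixes h :: "nat \<Rightarrow> real"
  assumes summable_zd: "summable (\<lambda>k. zd_weight (Suc k) * \<bar>h (Suc k)\<bar>)"
begin

lemma gain_series_le:
  "summable (\<lambda>k. flux_weight (Suc k) * \<bar>h (Suc k)\<bar>)"
  "(\<Sum>k. flux_weight (Suc k) * \<bar>h (Suc k)\<bar>) \<le> normZD a b z \<eta> h"
proof -
  have nonneg: "0 \<le> flux_weight (Suc k) * \<bar>h (Suc k)\<bar>" for k
    using flux_weight_nonneg[of "Suc k"] by simp
  have le: "flux_weight (Suc k) * \<bar>h (Suc k)\<bar> \<le> zd_weight (Suc k) * \<bar>h (Suc k)\<bar>" for k
    using flux_weight_le_zd_weight[of "Suc k"] by (simp add: mult_right_mono)
  note gain = summable_suminf_le_comparison[OF summable_zd nonneg le]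
  show "summable (\<lambda>k. flux_weight (Suc k) * \<bar>h (Suc k)\<bar>)"
    by (rule gain(1))
  show "(\<Sum>k. flux_weight (Suc k) * \<bar>h (Suc k)\<bar>) \<le> normZD a b z \<eta> h"
    unfolding normZD_eq_suminf by (rule gain(2))
qed

lemma loss_series_le:
  "summable (\<lambda>k. flux_weight (Suc k) * \<bar>h (Suc (Suc k))\<bar>)"
  "(\<Sum>k. flux_weight (Suc k) * \<bar>h (Suc (Suc k))\<bar>) \<le> normZD a b z \<eta> h"
proof -
  let ?D = "\<lambda>k. zd_weight (Suc k) * \<bar>h (Suc k)\<bar>"
  have summable_D_Suc: "summable (\<lambda>k. ?D (Suc k))"
    using summable_Suc_iff[of ?D] summable_zd by blast
  have nonneg: "0 \<le> flux_weight (Suc k) * \<bar>h (Suc (Suc k))\<bar>" for k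
    using flux_weight_nonneg[of "Suc k"] by simp
  have le: "flux_weight (Suc k) * \<bar>h (Suc (Suc k))\<bar> \<le> ?D (Suc k)" for k
    using flux_weight_le_zd_weight_Suc[of "Suc k"] by (simp add: mult_right_mono)
  note loss = summable_suminf_le_comparison[OF summable_D_Suc nonneg le]
  show "summable (\<lambda>k. flux_weight (Suc k) * \<bar>h (Suc (Suc k))\<bar>)"
    by (rule loss(1))
  have "(\<Sum>k. ?D (Suc k)) = normZD a b z \<eta> h - ?D 0"
    unfolding normZD_eq_suminf by (rule suminf_split_head[OF summable_zd])
  then show "(\<Sum>k. flux_weight (Suc k) * \<bar>h (Suc (Suc k))\<bar>) \<le> normZD a b z \<eta> h"
    using loss(2) zd_term_nonneg[of 0 h] by simp
qed

lemma monomer_series_le: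
  "summable (\<lambda>k. z * \<bar>h 1\<bar> * (wt (Suc k) * a (Suc k) * \<Theta> (Suc k)))"
  "(\<Sum>k. z * \<bar>h 1\<bar> * (wt (Suc k) * a (Suc k) * \<Theta> (Suc k))) \<le> normZD a b z \<eta> h * weighted_rate_sum"
proof -
  show "summable (\<lambda>k. z * \<bar>h 1\<bar> * (wt (Suc k) * a (Suc k) * \<Theta> (Suc k)))"
    by (intro summable_mult summable_weighted_a_Theta)
  have "z * \<bar>h 1\<bar> \<le> zd_weight 1 * \<bar>h 1\<bar>"
    using z_le_zd_weight_1 by (simp add: mult_right_mono)
  also have "\<dots> \<le> normZD a b z \<eta> h"
    using sum_le_suminf[OF summable_zd, of "{0}"] zd_term_nonneg[of _ h]
    by (simp add: normZD_eq_suminf)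
  finally have "z * \<bar>h 1\<bar> * weighted_rate_sum \<le> normZD a b z \<eta> h * weighted_rate_sum"
    using weighted_rate_sum_nonneg by (intro mult_right_mono)
  then show "(\<Sum>k. z * \<bar>h 1\<bar> * (wt (Suc k) * a (Suc k) * \<Theta> (Suc k)))
      \<le> normZD a b z \<eta> h * weighted_rate_sum"
    by (simp only: suminf_mult[OF summable_weighted_a_Theta])
qed

lemma flux_majorant_summable_le:
  "summable (\<lambda>k. flux_majorant h (Suc k))"
  "(\<Sum>k. flux_majorant h (Suc k)) \<le> (2 + weighted_rate_sum) * normZD a b z \<eta> h"
proof -
  let ?gain = "\<lambda>k. flux_weight (Suc k) * \<bar>h (Suc k)\<bar>"
  let ?mono = "\<lambda>k. z * \<bar>h 1\<bar> * (wt (Suc k) * a (Suc k) * \<Theta> (Suc k))"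
  let ?loss = "\<lambda>k. flux_weight (Suc k) * \<bar>h (Suc (Suc k))\<bar>"
  note series = gain_series_le monomer_series_le loss_series_le
  have majorant_split: "flux_majorant h (Suc k) = ?gain k + ?mono k + ?loss k" for k
    by (simp add: algebra_simps)
  show "summable (\<lambda>k. flux_majorant h (Suc k))"
    unfolding majorant_split using series by (intro summable_add)
  have "(\<Sum>k. flux_majorant h (Suc k)) = suminf ?gain + suminf ?mono + suminf ?loss"
    unfolding majorant_split using series by (simp add: suminf_add summable_add)
  then show "(\<Sum>k. flux_majorant h (Suc k)) \<le> (2 + weighted_rate_sum) * normZD a b z \<eta> h"
    using series by (simp add: algebra_simps)
qed

lemma weighted_Lop_1_le:
  "wt 1 * \<Theta> 1 * \<bar>Lop a b z h 1\<bar> \<le> 4 * exp \<eta> * (\<Sum>k. flux_majorant h (Suc k))"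
proof -
  let ?J = "flux a b z h"
  let ?R = "\<lambda>k. a (Suc k) * z * \<Theta> (Suc k) * h (Suc (Suc k))"
  let ?F = "\<lambda>k. flux_majorant h (Suc k)"
  note F = flux_majorant_summable_le
  have F_nonneg: "0 \<le> ?F k" for k
    using flux_weight_nonneg[of "Suc k"] by simp
  have F_le_sum: "?F k \<le> suminf ?F" for k
    using sum_le_suminf[OF F(1), of "{k}"] F_nonneg by simp
  have J_1: "\<bar>?J 1\<bar> \<le> suminf ?F"
    using abs_flux_le[of 1 h] F_le_sum[of 0] by simp
  have J_sum: "\<bar>\<Sum>k. ?J (Suc k)\<bar> \<le> suminf ?F"
  proof (rule norm_suminf_le[of "\<lambda>k. ?J (Suc k)" ?F, unfolded real_norm_def])
    show "\<bar>?J (Suc k)\<bar> \<le> ?F k" for k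
      by (rule abs_flux_le) simp
  qed (rule F(1))
  have R_0: "\<bar>a 1 * z\<^sup>2 * h 2\<bar> \<le> suminf ?F"
    using abs_monomer_term_le[of 0 h] F_le_sum[of 0] by (simp add: power2_eq_square numeral_2_eq_2 mult_ac)
  have R_sum: "\<bar>\<Sum>k. ?R k\<bar> \<le> suminf ?F"
    using norm_suminf_le[of ?R ?F] abs_monomer_term_le F(1) by simp
  have "\<bar>z * Lop a b z h 1\<bar> \<le> 4 * suminf ?F"
    using J_1 J_sum R_0 R_sum unfolding z_mult_Lop_1[OF less_imp_neq[OF z_pos, symmetric]]
    by linarith
  then show ?thesis
    using z_pos eta_nonneg by (simp add: abs_mult)
qed

lemma normZ_Lop_le:
  "summable (\<lambda>k. wt (Suc k) * \<Theta> (Suc k) * \<bar>Lop a b z h (Suc k)\<bar>)"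
  "normZ a b z \<eta> (Lop a b z h) \<le> (1 + 5 * exp \<eta>) * (2 + weighted_rate_sum) * normZD a b z \<eta> h"
proof -
  let ?F = "\<lambda>k. flux_majorant h (Suc k)"
  let ?u = "\<lambda>k. wt (Suc k) * \<Theta> (Suc k) * \<bar>Lop a b z h (Suc k)\<bar>"
  note F = flux_majorant_summable_le
  have F_nonneg: "0 \<le> ?F k" for k
    using flux_weight_nonneg[of "Suc k"] by simp
  have u_nonneg: "0 \<le> ?u k" for k
    using Theta_gt_0[of "Suc k"] by simp
  have u_0: "?u 0 \<le> 4 * exp \<eta> * suminf ?F"
    using weighted_Lop_1_le by simp
  note u = summable_suminf_le_shifted_majorant[where F = ?F and u = ?u,
      OF F(1) F_nonneg u_nonneg u_0 weighted_Lop_Suc_Suc_le]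
  show "summable ?u"
    by (rule u(1))
  have "normZ a b z \<eta> (Lop a b z h) = suminf ?u"
    unfolding normZ_def ..
  also have "\<dots> \<le> (1 + 5 * exp \<eta>) * suminf ?F"
    using u(2) by (simp add: algebra_simps)
  also have "\<dots> \<le> (1 + 5 * exp \<eta>) * ((2 + weighted_rate_sum) * normZD a b z \<eta> h)"
    using F(2) by (intro mult_left_mono) simp_all
  finally show "normZ a b z \<eta> (Lop a b z h)
      \<le> (1 + 5 * exp \<eta>) * (2 + weighted_rate_sum) * normZD a b z \<eta> h"
    by (simp add: mult.assoc)
qed

end

end

theorem mainTheorem17:
  fixes a b :: "nat \<Rightarrow> real" and z \<eta> :: real
  assumes H1: "\<exists>\<alpha>\<in>{0..1}. \<exists>A\<ge>0. \<forall>i\<ge>1. 0 \<le> a i \<and> a i \<le> A * real i powr \<alpha>"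
      and H1b: "\<forall>i\<ge>1. 0 \<le> b i"
      and H2: "\<exists>c>0. \<forall>i\<ge>1. c \<le> a i \<and> c \<le> b i"
      and H3: "(\<lambda>i. ereal (Qc a b (Suc i) / Qc a b i)) \<longlonglongrightarrow> inverse (zs a b)"
      and H4: "\<exists>l>0. (\<lambda>i. a (Suc i) / a i) \<longlonglongrightarrow> l"
      and H5: "\<exists>\<beta>\<in>{0..1}. \<exists>B>0. \<forall>i\<ge>1. b i \<le> B * real i powr \<beta>"
      and z: "0 < z" "ereal z < zs a b"
      and eta: "0 < \<eta>" "ereal (z * exp (2 * \<eta>)) < zs a b"
  shows "\<exists>K>0. \<forall>h. compact_supp h \<longrightarrow>
           summable (\<lambda>k. exp (\<eta> * real (Suc k)) * Theta a b z (Suc k) * \<bar>Lop a b z h (Suc k)\<bar>)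
         \<and> normZ a b z \<eta> (Lop a b z h) \<le> K * normZD a b z \<eta> h"
proof -
  obtain c where c: "c > 0" "\<forall>i\<ge>1. c \<le> a i \<and> c \<le> b i"
    using H2 by blast
  interpret weighted_subcritical a b z \<eta>
  proof
    show "0 < a i" "0 < b i" if "1 \<le> i" for i
      using c that by force+
    have "ereal (z * exp \<eta>) \<le> ereal (z * exp (2 * \<eta>))"
      using z(1) eta(1) by simp
    then show "ereal (z * exp \<eta>) < zs a b"
      using eta(2) by (rule order_le_less_trans)
  qed (use z eta in auto)
  define K where "K = (1 + 5 * exp \<eta>) * (2 + weighted_rate_sum)"
  have "0 < K"
    unfolding K_def using weighted_rate_sum_nonneg by (simp add: add_pos_nonneg)
  moreover have "summable (\<lambda>k. wt (Suc k) * \<Theta> (Suc k) * \<bar>Lop a b z h (Suc k)\<bar>)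
      \<and> normZ a b z \<eta> (Lop a b z h) \<le> K * normZD a b z \<eta> h" if "compact_supp h" for h
    using normZ_Lop_le[OF summable_compact_supp[OF that]] unfolding K_def by blast
  ultimately show ?thesis
    by blast
qed

end
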